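(* Let $\lambda,a\in\mathbb{C}$ with $|\lambda|\ge 1$ and $f_{\lambda,a}(z)=\lambda\sin(z)+a$. Let $W_1,\dots,W_m$ be a cycle of periodic components of the Fatou set of $f_{\lambda,a}$ such that $\bigcup_{i=1}^m W_i$ is horizontally bounded. Then $W_i$ is bounded for every $i\in\{1,\dots,m\}$.
   Context: The Fatou set of an entire function is the set of points having a neighbourhood on which the iterates form a normal family. A cycle of periodic components means Fatou components with $f_{\lambda,a}(W_i)\subseteq W_{i+1}$ (indices mod $m$). A set is horizontally bounded if the real parts of its points form a bounded set. *)

theory Defs
  imports "HOL-Complex_Analysis.Complex_Analysis"
begin

text \<open>Normal family (in the sense of Montel, spherical metric): every sequence in the
family has a subsequence converging locally uniformly on U either to a function
or to infinity.\<close>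
definition normal_family_on :: "(nat \<Rightarrow> complex \<Rightarrow> complex) \<Rightarrow> complex set \<Rightarrow> bool" where
  "normal_family_on F U \<longleftrightarrow>
     (\<forall>s :: nat \<Rightarrow> nat. \<exists>r :: nat \<Rightarrow> nat. strict_mono r \<and>
        ((\<exists>g. \<forall>K. compact K \<and> K \<subseteq> U \<longrightarrow>
              uniform_limit K (\<lambda>k. F (s (r k))) g sequentially)
         \<or> (\<forall>K. compact K \<and> K \<subseteq> U \<longrightarrow>
              (\<forall>B. \<forall>\<^sub>F k in sequentially. \<forall>z\<in>K. norm (F (s (r k)) z) \<ge> B))))"

definition fatou_set :: "(complex \<Rightarrow> complex) \<Rightarrow> complex set" where
  "fatou_set f = {z. \<exists>U. open U \<and> z \<in> U \<and> normal_family_on (\<lambda>n. f ^^ n) U}"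

definition fatou_component :: "(complex \<Rightarrow> complex) \<Rightarrow> complex set \<Rightarrow> bool" where
  "fatou_component f W \<longleftrightarrow> (\<exists>z\<in>fatou_set f. W = connected_component_set (fatou_set f) z)"

definition horizontally_bounded :: "complex set \<Rightarrow> bool" where
  "horizontally_bounded S \<longleftrightarrow> bounded (Re ` S)"

definition f_sin :: "complex \<Rightarrow> complex \<Rightarrow> complex \<Rightarrow> complex" where
  "f_sin lam a z = lam * sin z + a"

end

theory Submission
  imports Defs
begin

text \<open>If some \<open>W\<^sub>i\<close> were unbounded, it would contain a disc around a point \<open>z\<close> far from the
real axis. Since the whole cycle lies in a vertical strip \<open>\<bar>Re w\<bar> \<le> R\<close>, the orbit of \<open>z\<close> can
only stay there if \<open>\<bar>Im w\<bar>\<close> keeps growing, because \<open>\<bar>\<lambda> sin w\<bar> \<ge> sinh \<bar>Im w\<bar>\<close>; along such an orbit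
\<open>\<bar>\<lambda> cos\<bar> \<ge> 2\<close>, so \<open>\<bar>(f\<^sup>n)'(z)\<bar> \<ge> 2\<^sup>n\<close>. On the other hand \<open>exp \<circ> f\<^sup>n\<close> is bounded by \<open>exp R\<close> on the
disc, and the Cauchy estimate bounds \<open>\<bar>(f\<^sup>n)'(z)\<bar>\<close> independently of \<open>n\<close>.\<close>

lemma sinh_ge_linear:
  fixes t C :: real
  assumes "C \<ge> 0" "t \<ge> 8 + 2 * C"
  shows "sinh t \<ge> t + 4 + C"
proof -
  have "exp t = exp (t/2)^2" by (simp flip: exp_of_nat_mult)
  also have "\<dots> \<ge> (1 + t/2)^2"
    using exp_ge_add_one_self[of "t/2"] assms by (intro power_mono) auto
  also have "(1 + t/2)^2 = 1 + 3 * t + t * (t - 8) / 4"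
    by (simp add: power2_eq_square field_simps)
  also have "\<dots> \<ge> 1 + 3 * t" using assms by simp
  finally have "exp t \<ge> 1 + 3 * t" .
  moreover have "exp (-t) \<le> 1" using assms by simp
  ultimately show ?thesis using assms unfolding sinh_field_def by argo
qed

lemma abs_sinh_Im_le_norm_cos: "\<bar>sinh (Im z)\<bar> \<le> norm (cos z)"
proof -
  have "\<bar>sinh (Im z)\<bar>^2 \<le> norm (cos z)^2"
    by (simp add: norm_cos_squared sinh_def exp_minus power_divide)
  then show ?thesis using abs_le_square_iff[of "sinh (Im z)" "norm (cos z)"] by simp
qed

lemma abs_sinh_Im_le_norm_sin: "\<bar>sinh (Im z)\<bar> \<le> norm (sin z)"
  using abs_sinh_Im_le_norm_cos[of "of_real (pi/2) - z"] by (simp add: cos_diff)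

lemma f_sin_escapes_vertically:
  fixes lam a z :: complex and R :: real
  assumes "norm lam \<ge> 1" "R \<ge> 0" "\<bar>Im z\<bar> \<ge> 8 + 2 * (norm a + R)"
    and "\<bar>Re (f_sin lam a z)\<bar> \<le> R"
  shows "\<bar>Im (f_sin lam a z)\<bar> \<ge> \<bar>Im z\<bar> + 1" and "norm (lam * cos z) \<ge> 2"
proof -
  define s where "s = sinh \<bar>Im z\<bar>"
  have s: "s \<ge> \<bar>Im z\<bar> + 4 + (norm a + R)"
    unfolding s_def using assms(2,3) by (intro sinh_ge_linear) auto
  have "norm (lam * sin z) \<ge> s"
    using mult_mono[OF assms(1) abs_sinh_Im_le_norm_sin[of z]] by (simp add: s_def norm_mult)
  then have "norm (f_sin lam a z) \<ge> s - norm a"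
    using norm_triangle_ineq2[of "lam * sin z" "-a"] by (simp add: f_sin_def)
  with cmod_le[of "f_sin lam a z"] assms(4) s
  show "\<bar>Im (f_sin lam a z)\<bar> \<ge> \<bar>Im z\<bar> + 1" by linarith
  have "norm (lam * cos z) \<ge> s"
    using mult_mono[OF assms(1) abs_sinh_Im_le_norm_cos[of z]] by (simp add: s_def norm_mult)
  with s assms(2) show "norm (lam * cos z) \<ge> 2"
    using norm_ge_zero[of a] by linarith
qed

lemma has_field_derivative_funpow:
  fixes f f' :: "'a::real_normed_field \<Rightarrow> 'a"
  assumes "\<And>w. (f has_field_derivative f' w) (at w)"
  shows "((f ^^ n) has_field_derivative (\<Prod>k<n. f' ((f ^^ k) z))) (at z)"
proof (induction n)
  case 0
  then show ?case by simp
next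
  case (Suc n)
  from DERIV_chain[OF assms Suc.IH] show ?case
    by (simp add: o_def mult.commute)
qed

lemma norm_deriv_le_of_Re_bounded:
  fixes g :: "complex \<Rightarrow> complex"
  assumes hol: "g holomorphic_on ball z r" and "r > 0"
    and bd: "\<And>w. w \<in> ball z r \<Longrightarrow> \<bar>Re (g w)\<bar> \<le> R"
  shows "norm (deriv g z) \<le> 2 * exp (2 * R) / r"
proof -
  define h where "h = (\<lambda>w. exp (g w))"
  have holh: "h holomorphic_on ball z r"
    unfolding h_def using hol by (intro holomorphic_intros)
  have "norm ((deriv ^^ 1) h z) \<le> fact 1 * exp R / (r/2)^1"
  proof (rule Cauchy_inequality)
    show "h holomorphic_on ball z (r/2)"
      using holh by (rule holomorphic_on_subset) (use \<open>r > 0\<close> in \<open>simp add: subset_ball\<close>)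
    show "continuous_on (cball z (r/2)) h"
      using holomorphic_on_imp_continuous_on[OF holh] by (rule continuous_on_subset) (use \<open>r > 0\<close> in auto)
    show "0 < r/2" using \<open>r > 0\<close> by simp
  next
    fix x assume "norm (z - x) = r/2"
    then have "x \<in> ball z r" using \<open>r > 0\<close> by (simp add: dist_norm)
    then show "norm (h x) \<le> exp R" using bd[of x] by (simp add: h_def)
  qed
  moreover have "deriv h z = exp (g z) * deriv g z"
    unfolding h_def using holomorphic_derivI[OF hol open_ball, of z] \<open>r > 0\<close>
    by (intro DERIV_imp_deriv DERIV_chain2[OF DERIV_exp]) auto
  ultimately have "exp (Re (g z)) * norm (deriv g z) \<le> 2 * exp R / r"
    by (simp add: norm_mult mult.commute)
  moreover have "exp (- R) \<le> exp (Re (g z))" using bd[of z] \<open>r > 0\<close> by simp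
  ultimately have "exp (- R) * norm (deriv g z) \<le> 2 * exp R / r"
    by (meson mult_right_mono norm_ge_zero order_trans)
  then have "norm (deriv g z) \<le> 2 * (exp R * exp R) / r" by (simp add: exp_minus field_simps)
  then show ?thesis by (simp add: mult_exp_exp)
qed

lemma has_field_derivative_f_sin: "(f_sin lam a has_field_derivative lam * cos z) (at z)"
  unfolding f_sin_def by (auto intro!: derivative_eq_intros)

lemma f_sin_orbit_far_from_axis:
  fixes lam a z :: complex and R :: real
  assumes "norm lam \<ge> 1" "R \<ge> 0" "\<bar>Im z\<bar> \<ge> 8 + 2 * (norm a + R)"
    and strip: "\<And>n. \<bar>Re ((f_sin lam a ^^ n) z)\<bar> \<le> R"
  shows "\<bar>Im ((f_sin lam a ^^ n) z)\<bar> \<ge> 8 + 2 * (norm a + R)"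
proof (induction n)
  case 0
  then show ?case using assms(3) by simp
next
  case (Suc n)
  have "\<bar>Re (f_sin lam a ((f_sin lam a ^^ n) z))\<bar> \<le> R" using strip[of "Suc n"] by simp
  from f_sin_escapes_vertically(1)[OF assms(1,2) Suc.IH this] Suc.IH show ?case by simp
qed

lemma f_sin_deriv_funpow_ge:
  fixes lam a z :: complex and R :: real
  assumes "norm lam \<ge> 1" "R \<ge> 0" "\<bar>Im z\<bar> \<ge> 8 + 2 * (norm a + R)"
    and strip: "\<And>n. \<bar>Re ((f_sin lam a ^^ n) z)\<bar> \<le> R"
  shows "2 ^ n \<le> norm (deriv (f_sin lam a ^^ n) z)"
proof -
  let ?z = "\<lambda>k. (f_sin lam a ^^ k) z"
  have "norm (lam * cos (?z k)) \<ge> 2" for k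
  proof (rule f_sin_escapes_vertically(2)[OF assms(1,2)])
    show "\<bar>Im (?z k)\<bar> \<ge> 8 + 2 * (norm a + R)" by (rule f_sin_orbit_far_from_axis[OF assms])
    show "\<bar>Re (f_sin lam a (?z k))\<bar> \<le> R" using strip[of "Suc k"] by simp
  qed
  then have "(\<Prod>k<n. 2) \<le> (\<Prod>k<n. norm (lam * cos (?z k)))"
    by (intro prod_mono) auto
  also have "\<dots> = norm (deriv (f_sin lam a ^^ n) z)"
    using DERIV_imp_deriv[OF has_field_derivative_funpow[OF has_field_derivative_f_sin]]
    by (simp add: prod_norm)
  finally show ?thesis by simp
qed

lemma f_sin_no_disc_with_orbits_in_strip:
  fixes lam a z :: complex and R r :: real
  assumes "norm lam \<ge> 1" "R \<ge> 0" "r > 0" "\<bar>Im z\<bar> \<ge> 8 + 2 * (norm a + R)"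
    and strip: "\<And>n w. w \<in> ball z r \<Longrightarrow> \<bar>Re ((f_sin lam a ^^ n) w)\<bar> \<le> R"
  shows False
proof -
  have "2 ^ n \<le> 2 * exp (2 * R) / r" for n
  proof -
    have "(f_sin lam a ^^ n) holomorphic_on ball z r"
      using has_field_derivative_funpow[OF has_field_derivative_f_sin]
      unfolding holomorphic_on_def field_differentiable_def
      by (blast intro: has_field_derivative_at_within)
    then have "norm (deriv (f_sin lam a ^^ n) z) \<le> 2 * exp (2 * R) / r"
      using \<open>r > 0\<close> strip by (rule norm_deriv_le_of_Re_bounded)
    moreover have "2 ^ n \<le> norm (deriv (f_sin lam a ^^ n) z)"
      using assms(1,2,4) strip \<open>r > 0\<close> by (intro f_sin_deriv_funpow_ge) auto
    ultimately show ?thesis by linarith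
  qed
  moreover obtain n where "2 * exp (2 * R) / r < 2 ^ n" using real_arch_pow by fastforce
  ultimately show False by (meson not_le)
qed

lemma funpow_in_cycle:
  assumes cycle: "\<And>i. i < m \<Longrightarrow> f ` W i \<subseteq> W (Suc i mod m)"
    and "j < m" "z \<in> W j"
  shows "(f ^^ n) z \<in> W ((j + n) mod m)"
proof (induction n)
  case 0
  then show ?case using assms(2,3) by simp
next
  case (Suc n)
  have "(j + n) mod m < m" using \<open>j < m\<close> by simp
  with cycle Suc.IH have "f ((f ^^ n) z) \<in> W (Suc ((j + n) mod m) mod m)" by blast
  then show ?case by (simp add: mod_Suc_eq)
qed

lemma open_fatou_set: "open (fatou_set f)"
proof -
  have "fatou_set f = \<Union>{U. open U \<and> normal_family_on (\<lambda>n. f ^^ n) U}"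
    unfolding fatou_set_def by blast
  then show ?thesis by auto
qed

lemma open_fatou_component: "fatou_component f W \<Longrightarrow> open W"
  unfolding fatou_component_def using open_connected_component open_fatou_set by blast

theorem mainTheorem8:
  fixes lam a :: complex and m :: nat and W :: "nat \<Rightarrow> complex set"
  assumes "norm lam \<ge> 1"
    and "m \<ge> 1"
    and "\<And>i. i < m \<Longrightarrow> fatou_component (f_sin lam a) (W i)"
    and "\<And>i. i < m \<Longrightarrow> f_sin lam a ` W i \<subseteq> W (Suc i mod m)"
    and "horizontally_bounded (\<Union>i<m. W i)"
  shows "\<forall>i<m. bounded (W i)"
proof (rule ccontr)
  assume "\<not> (\<forall>i<m. bounded (W i))"
  then obtain i where i: "i < m" "\<not> bounded (W i)" by blast
  obtain R where "R > 0" and R: "\<And>w. w \<in> (\<Union>i<m. W i) \<Longrightarrow> \<bar>Re w\<bar> \<le> R"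
    using assms(5) unfolding horizontally_bounded_def bounded_pos by auto
  have strip: "\<bar>Re ((f_sin lam a ^^ n) w)\<bar> \<le> R" if "w \<in> W i" for n w
  proof -
    have "(i + n) mod m < m" using assms(2) by simp
    moreover have "(f_sin lam a ^^ n) w \<in> W ((i + n) mod m)"
      using assms(4) i(1) that by (rule funpow_in_cycle)
    ultimately show ?thesis using R by blast
  qed
  obtain z where z: "z \<in> W i" "norm z > R + 8 + 2 * (norm a + R)"
    using i(2) unfolding bounded_iff by (meson not_le)
  moreover have "\<bar>Re z\<bar> \<le> R" using R z(1) i(1) by blast
  ultimately have "\<bar>Im z\<bar> \<ge> 8 + 2 * (norm a + R)"
    using cmod_le[of z] by linarith
  moreover obtain r where "r > 0" "ball z r \<subseteq> W i"
    using open_fatou_component[OF assms(3)[OF i(1)]] z(1) open_contains_ball by blast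
  ultimately show False
    using f_sin_no_disc_with_orbits_in_strip[OF assms(1) less_imp_le[OF \<open>R > 0\<close>]] strip by blast
qed

end
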